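(* Let $G$ be a graph, $K$ a clique of $G$, and $x$ a vertex not in $K$ which is either a vertex of $G$ adjacent to no vertex of $K$ or a new vertex not in $G$, such that all vertices of $K$ have the same closed neighborhood in $G-x$. For $0\le i\le |K|$, let $G_i$ be the graph obtained from $G$ (adding $x$ as a new vertex if it is not in $G$) by joining $x$ by edges to exactly $i$ vertices of $K$. Then \[ (i-j)X_{G_k}+(j-k)X_{G_i}+(k-i)X_{G_j}=0\qquad\text{for any } 0\le i\le j\le k\le |K|. \]
   Context: All graphs are finite simple graphs. The chromatic symmetric function of a graph $G$ is $X_G=\sum_{\kappa}\prod_{v\in V(G)}x_{\kappa(v)}$, where $\kappa$ ranges over proper colorings $\kappa:V(G)\to\{1,2,\dots\}$. A clique is a set of pairwise adjacent vertices. The closed neighborhood of a vertex is the set consisting of the vertex and all vertices adjacent to it. *)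

theory Defs
  imports Main
begin

definition simple_graph :: "'a set \<Rightarrow> 'a set set \<Rightarrow> bool" where
  "simple_graph V E \<longleftrightarrow> finite V \<and>
     (\<forall>e\<in>E. \<exists>u v. e = {u, v} \<and> u \<noteq> v \<and> u \<in> V \<and> v \<in> V)"

definition is_clique :: "'a set \<Rightarrow> 'a set set \<Rightarrow> 'a set \<Rightarrow> bool" where
  "is_clique V E K \<longleftrightarrow> K \<subseteq> V \<and> (\<forall>u\<in>K. \<forall>v\<in>K. u \<noteq> v \<longrightarrow> {u, v} \<in> E)"

definition closed_nbhd :: "'a set \<Rightarrow> 'a set set \<Rightarrow> 'a \<Rightarrow> 'a set" where
  "closed_nbhd V E v = {v} \<union> {u \<in> V. {u, v} \<in> E}"

definition del_vertex_edges :: "'a set set \<Rightarrow> 'a \<Rightarrow> 'a set set" where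
  "del_vertex_edges E x = {e \<in> E. x \<notin> e}"

text \<open>Proper colourings with colours in {1,2,...}; the colouring is taken to be
  0 outside V so that colourings of V correspond bijectively to such functions.\<close>
definition proper_coloring :: "'a set \<Rightarrow> 'a set set \<Rightarrow> ('a \<Rightarrow> nat) \<Rightarrow> bool" where
  "proper_coloring V E \<kappa> \<longleftrightarrow>
     (\<forall>v. v \<notin> V \<longrightarrow> \<kappa> v = 0) \<and> (\<forall>v\<in>V. 1 \<le> \<kappa> v) \<and>
     (\<forall>u v. {u, v} \<in> E \<longrightarrow> \<kappa> u \<noteq> \<kappa> v)"

text \<open>The chromatic symmetric function X_G = sum over proper colourings kappa of
  prod_v x_(kappa v), represented by its coefficients: the coefficient of the
  monomial prod_c x_c^(alpha c) is the number of proper colourings kappa with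
  exactly alpha c vertices of colour c, for every colour c.\<close>
definition chrom_coeff :: "'a set \<Rightarrow> 'a set set \<Rightarrow> (nat \<Rightarrow> nat) \<Rightarrow> nat" where
  "chrom_coeff V E \<alpha> =
     card {\<kappa>. proper_coloring V E \<kappa> \<and> (\<forall>c. card {v \<in> V. \<kappa> v = c} = \<alpha> c)}"

definition join_edges :: "'a set set \<Rightarrow> 'a \<Rightarrow> 'a set \<Rightarrow> 'a set set" where
  "join_edges E x S = E \<union> {{x, v} | v. v \<in> S}"

end

theory Submission
  imports Defs "HOL-Combinatorics.Permutations"
begin

text \<open>Let P be the set of proper colourings of G of a fixed type, and Q u the set of those
  colourings in P that give x the same colour as u. A colouring of G joined to S is a colouring
  in P avoiding the events Q u for u in S; these events are pairwise disjoint because S is a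
  clique. Two vertices of K are twins, so the transposition exchanging them is an automorphism
  of G fixing x, and all Q u with u in K have the same size q. Hence the coefficient for G
  joined to S equals card P - card S * q, an affine function of card S, and any three values
  of an affine function satisfy the stated relation.\<close>

definition colorings_of_type :: "'a set \<Rightarrow> 'a set set \<Rightarrow> (nat \<Rightarrow> nat) \<Rightarrow> ('a \<Rightarrow> nat) set" where
  "colorings_of_type V E \<alpha> =
     {\<kappa>. proper_coloring V E \<kappa> \<and> (\<forall>c. card {v \<in> V. \<kappa> v = c} = \<alpha> c)}"

lemma chrom_coeff_eq_card: "chrom_coeff V E \<alpha> = card (colorings_of_type V E \<alpha>)"
  by (simp add: chrom_coeff_def colorings_of_type_def)

lemma finite_colorings_of_type:
  assumes "finite V"
  shows "finite (colorings_of_type V E \<alpha>)"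
proof (cases "colorings_of_type V E \<alpha> = {}")
  case False
  then obtain \<kappa>\<^sub>0 where \<kappa>\<^sub>0: "\<kappa>\<^sub>0 \<in> colorings_of_type V E \<alpha>" by blast
  have "colorings_of_type V E \<alpha> \<subseteq> {\<kappa>. \<forall>v. (v \<in> V \<longrightarrow> \<kappa> v \<in> \<kappa>\<^sub>0 ` V) \<and> (v \<notin> V \<longrightarrow> \<kappa> v = 0)}"
  proof safe
    fix \<kappa> v assume \<kappa>: "\<kappa> \<in> colorings_of_type V E \<alpha>"
    then show "v \<notin> V \<Longrightarrow> \<kappa> v = 0"
      by (simp add: colorings_of_type_def proper_coloring_def)
    assume "v \<in> V"
    \<comment> \<open>colourings of the same type use the same colours\<close>
    then have "card {w \<in> V. \<kappa> w = \<kappa> v} \<noteq> 0"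
      using assms by auto
    then have "card {w \<in> V. \<kappa>\<^sub>0 w = \<kappa> v} \<noteq> 0"
      using \<kappa> \<kappa>\<^sub>0 by (simp add: colorings_of_type_def)
    then show "\<kappa> v \<in> \<kappa>\<^sub>0 ` V"
      by (metis (mono_tags, lifting) card.empty empty_Collect_eq image_eqI mem_Collect_eq)
  qed
  moreover have "finite {\<kappa>. \<forall>v. (v \<in> V \<longrightarrow> \<kappa> v \<in> \<kappa>\<^sub>0 ` V) \<and> (v \<notin> V \<longrightarrow> \<kappa> v = 0)}"
    using assms by (intro finite_set_of_finite_funs) auto
  ultimately show ?thesis
    by (rule finite_subset)
qed simp

lemma proper_coloring_join_edges:
  "proper_coloring V (join_edges E x S) \<kappa> \<longleftrightarrow> proper_coloring V E \<kappa> \<and> (\<forall>v\<in>S. \<kappa> x \<noteq> \<kappa> v)"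
  unfolding proper_coloring_def join_edges_def
  by (auto simp: doubleton_eq_iff) blast+

lemma comp_permutes_in_colorings_of_type:
  assumes \<kappa>: "\<kappa> \<in> colorings_of_type V E \<alpha>"
    and \<pi>: "\<pi> permutes V"
    and edges: "\<And>a b. {a, b} \<in> E \<Longrightarrow> {\<pi> a, \<pi> b} \<in> E"
  shows "\<kappa> \<circ> \<pi> \<in> colorings_of_type V E \<alpha>"
proof -
  have "proper_coloring V E (\<kappa> \<circ> \<pi>)"
    using \<kappa> edges permutes_not_in[OF \<pi>] permutes_in_image[OF \<pi>]
    by (simp add: colorings_of_type_def proper_coloring_def)
  moreover have "card {v \<in> V. (\<kappa> \<circ> \<pi>) v = c} = card {v \<in> V. \<kappa> v = c}" for c
  proof -
    have "\<pi> ` {v \<in> V. (\<kappa> \<circ> \<pi>) v = c} = {v \<in> V. \<kappa> v = c}"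
      using permutes_image[OF \<pi>] by force
    then show ?thesis
      by (metis card_image permutes_inj[OF \<pi>] inj_on_subset subset_UNIV)
  qed
  ultimately show ?thesis
    using \<kappa> by (simp add: colorings_of_type_def)
qed

lemma card_colorings_agreeing_le:
  assumes "finite V"
    and \<pi>: "\<pi> permutes V"
    and edges: "\<And>a b. {a, b} \<in> E \<Longrightarrow> {\<pi> a, \<pi> b} \<in> E"
    and "\<pi> x = x" "\<pi> v = u"
  shows "card {\<kappa> \<in> colorings_of_type V E \<alpha>. \<kappa> x = \<kappa> u}
       \<le> card {\<kappa> \<in> colorings_of_type V E \<alpha>. \<kappa> x = \<kappa> v}"
proof (rule card_inj_on_le)
  show "inj_on (\<lambda>\<kappa>. \<kappa> \<circ> \<pi>) {\<kappa> \<in> colorings_of_type V E \<alpha>. \<kappa> x = \<kappa> u}"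
    by (rule inj_onI) (metis comp_assoc comp_id permutes_inv_o(1)[OF \<pi>])
  show "(\<lambda>\<kappa>. \<kappa> \<circ> \<pi>) ` {\<kappa> \<in> colorings_of_type V E \<alpha>. \<kappa> x = \<kappa> u}
      \<subseteq> {\<kappa> \<in> colorings_of_type V E \<alpha>. \<kappa> x = \<kappa> v}"
    using comp_permutes_in_colorings_of_type[OF _ \<pi> edges] assms(4,5) by auto
  show "finite {\<kappa> \<in> colorings_of_type V E \<alpha>. \<kappa> x = \<kappa> v}"
    using finite_colorings_of_type[OF assms(1)] by simp
qed

lemma transpose_twins_preserves_edges:
  assumes twins: "\<And>w. w \<noteq> u \<Longrightarrow> w \<noteq> v \<Longrightarrow> {w, u} \<in> E \<longleftrightarrow> {w, v} \<in> E"
    and loopless: "\<And>w. {w} \<notin> E"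
    and ab: "{a, b} \<in> E"
  shows "{transpose u v a, transpose u v b} \<in> E"
proof -
  have flip: "{w, transpose u v t} \<in> E" if "{w, t} \<in> E" "w \<noteq> u" "w \<noteq> v" for w t
    by (metis that twins transpose_apply_first transpose_apply_second transpose_apply_other)
  consider "a \<in> {u, v}" "b \<in> {u, v}" | "a \<notin> {u, v}" | "b \<notin> {u, v}"
    by blast
  then show ?thesis
  proof cases
    case 1
    moreover have "a \<noteq> b"
      using ab loopless by force
    ultimately have "{transpose u v a, transpose u v b} = {a, b}"
      by auto
    then show ?thesis
      using ab by simp
  next
    case 2
    then show ?thesis
      using flip[of a b] ab by simp
  next
    case 3
    then show ?thesis
      using flip[of b a] ab by (simp add: insert_commute)
  qed
qed

lemma card_colorings_agreeing_twins:
  assumes "finite V" "u \<in> V" "v \<in> V" "x \<noteq> u" "x \<noteq> v"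
    and twins: "\<And>w. w \<noteq> u \<Longrightarrow> w \<noteq> v \<Longrightarrow> {w, u} \<in> E \<longleftrightarrow> {w, v} \<in> E"
    and loopless: "\<And>w. {w} \<notin> E"
  shows "card {\<kappa> \<in> colorings_of_type V E \<alpha>. \<kappa> x = \<kappa> u}
       = card {\<kappa> \<in> colorings_of_type V E \<alpha>. \<kappa> x = \<kappa> v}"
proof -
  have twins': "\<And>w. w \<noteq> v \<Longrightarrow> w \<noteq> u \<Longrightarrow> {w, v} \<in> E \<longleftrightarrow> {w, u} \<in> E"
    using twins by blast
  show ?thesis
    using assms
      card_colorings_agreeing_le[OF _ permutes_swap_id
        transpose_twins_preserves_edges[OF twins loopless], of V x v u \<alpha>]
      card_colorings_agreeing_le[OF _ permutes_swap_id
        transpose_twins_preserves_edges[OF twins' loopless], of V x u v \<alpha>]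
    by (simp add: transpose_commute)
qed

lemma chrom_coeff_join_edges:
  assumes "finite V" "finite S"
    and clique: "\<And>u v. u \<in> S \<Longrightarrow> v \<in> S \<Longrightarrow> u \<noteq> v \<Longrightarrow> {u, v} \<in> E"
  shows "chrom_coeff V (join_edges E x S) \<alpha>
         + (\<Sum>u\<in>S. card {\<kappa> \<in> colorings_of_type V E \<alpha>. \<kappa> x = \<kappa> u})
       = chrom_coeff V E \<alpha>"
proof -
  define P where "P = colorings_of_type V E \<alpha>"
  define Q where "Q u = {\<kappa> \<in> P. \<kappa> x = \<kappa> u}" for u
  have "finite P"
    unfolding P_def using assms(1) by (rule finite_colorings_of_type)
  have disjoint: "Q u \<inter> Q v = {}" if "u \<in> S" "v \<in> S" "u \<noteq> v" for u v
  proof -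
    have "\<kappa> u \<noteq> \<kappa> v" if "\<kappa> \<in> P" for \<kappa>
      using \<open>\<kappa> \<in> P\<close> clique[OF \<open>u \<in> S\<close> \<open>v \<in> S\<close> \<open>u \<noteq> v\<close>]
      by (simp add: P_def colorings_of_type_def proper_coloring_def)
    then show ?thesis
      by (auto simp: Q_def) metis
  qed
  have P_Int_union: "P \<inter> (\<Union>u\<in>S. Q u) = (\<Union>u\<in>S. Q u)"
    by (auto simp: Q_def)
  have "colorings_of_type V (join_edges E x S) \<alpha> = P - (\<Union>u\<in>S. Q u)"
    by (auto simp: P_def Q_def colorings_of_type_def proper_coloring_join_edges)
  moreover have "card (\<Union>u\<in>S. Q u) = (\<Sum>u\<in>S. card (Q u))"
    using \<open>finite P\<close> assms(2) disjoint by (intro card_UN_disjoint) (auto simp: Q_def)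
  moreover have "card P = card (\<Union>u\<in>S. Q u) + card (P - (\<Union>u\<in>S. Q u))"
    using card_Int_Diff[OF \<open>finite P\<close>, of "\<Union>u\<in>S. Q u"] P_Int_union by simp
  ultimately show ?thesis
    by (simp add: chrom_coeff_eq_card P_def Q_def)
qed

lemma chrom_coeff_join_edges_twin_clique:
  assumes "finite V" "K \<subseteq> V" "x \<notin> K"
    and clique: "\<And>u v. u \<in> K \<Longrightarrow> v \<in> K \<Longrightarrow> u \<noteq> v \<Longrightarrow> {u, v} \<in> E"
    and twins: "\<And>u v w. u \<in> K \<Longrightarrow> v \<in> K \<Longrightarrow> w \<noteq> u \<Longrightarrow> w \<noteq> v \<Longrightarrow> {w, u} \<in> E \<longleftrightarrow> {w, v} \<in> E"
    and loopless: "\<And>w. {w} \<notin> E"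
  shows "\<exists>q. \<forall>S \<subseteq> K. chrom_coeff V (join_edges E x S) \<alpha> + card S * q = chrom_coeff V E \<alpha>"
proof (intro exI allI impI)
  define u\<^sub>0 where "u\<^sub>0 = (SOME u. u \<in> K)"
  fix S assume "S \<subseteq> K"
  have "card {\<kappa> \<in> colorings_of_type V E \<alpha>. \<kappa> x = \<kappa> u}
      = card {\<kappa> \<in> colorings_of_type V E \<alpha>. \<kappa> x = \<kappa> u\<^sub>0}" if "u \<in> S" for u
  proof -
    have "u \<in> K" "u\<^sub>0 \<in> K"
      using that \<open>S \<subseteq> K\<close> someI[of "\<lambda>u. u \<in> K"] by (auto simp: u\<^sub>0_def)
    then show ?thesis
      using assms(1-3) by (intro card_colorings_agreeing_twins twins loopless) auto
  qed
  then have sum_eq: "(\<Sum>u\<in>S. card {\<kappa> \<in> colorings_of_type V E \<alpha>. \<kappa> x = \<kappa> u})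
      = card S * card {\<kappa> \<in> colorings_of_type V E \<alpha>. \<kappa> x = \<kappa> u\<^sub>0}"
    by simp
  have "finite S"
    using \<open>S \<subseteq> K\<close> assms(1,2) by (meson finite_subset)
  moreover have "u \<in> S \<Longrightarrow> v \<in> S \<Longrightarrow> u \<noteq> v \<Longrightarrow> {u, v} \<in> E" for u v
    using clique \<open>S \<subseteq> K\<close> by blast
  ultimately have "chrom_coeff V (join_edges E x S) \<alpha>
      + (\<Sum>u\<in>S. card {\<kappa> \<in> colorings_of_type V E \<alpha>. \<kappa> x = \<kappa> u}) = chrom_coeff V E \<alpha>"
    by (rule chrom_coeff_join_edges[OF assms(1)])
  then show "chrom_coeff V (join_edges E x S) \<alpha>
      + card S * card {\<kappa> \<in> colorings_of_type V E \<alpha>. \<kappa> x = \<kappa> u\<^sub>0} = chrom_coeff V E \<alpha>"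
    by (simp only: sum_eq)
qed

lemma simple_graph_edgeD:
  assumes "simple_graph V E" "{a, b} \<in> E"
  shows "a \<in> V" "b \<in> V" "a \<noteq> b"
  using assms by (auto simp: simple_graph_def doubleton_eq_iff)

lemma adjacent_iff_of_closed_nbhd_eq:
  assumes G: "simple_graph V E"
    and "u \<noteq> x" "v \<noteq> x" "{x, u} \<notin> E" "{x, v} \<notin> E"
    and nbhd: "closed_nbhd (V - {x}) (del_vertex_edges E x) u
             = closed_nbhd (V - {x}) (del_vertex_edges E x) v"
    and "w \<noteq> u" "w \<noteq> v"
  shows "{w, u} \<in> E \<longleftrightarrow> {w, v} \<in> E"
proof (cases "w = x \<or> w \<notin> V")
  case True
  then show ?thesis
    using assms(4,5) simple_graph_edgeD[OF G] by blast
next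
  case False
  then have "w \<in> closed_nbhd (V - {x}) (del_vertex_edges E x) t \<longleftrightarrow> {w, t} \<in> E"
    if "t \<in> {u, v}" for t
    using that assms(2,3,7,8) by (auto simp: closed_nbhd_def del_vertex_edges_def insert_commute)
  then show ?thesis
    using nbhd by blast
qed

theorem corollary2p3:
  fixes V :: "'a set" and E :: "'a set set" and K :: "'a set" and x :: 'a
    and Si Sj Sk :: "'a set" and i j k :: nat
  assumes "simple_graph V E"
    and "is_clique V E K"
    and "x \<notin> K"
    and "x \<notin> V \<or> (x \<in> V \<and> (\<forall>v\<in>K. {x, v} \<notin> E))"
    and "\<forall>u\<in>K. \<forall>v\<in>K.
           closed_nbhd (V - {x}) (del_vertex_edges E x) u
         = closed_nbhd (V - {x}) (del_vertex_edges E x) v"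
    and "Si \<subseteq> K" "card Si = i"
    and "Sj \<subseteq> K" "card Sj = j"
    and "Sk \<subseteq> K" "card Sk = k"
    and "i \<le> j" "j \<le> k"
  shows "\<forall>\<alpha>. (int i - int j) * int (chrom_coeff (insert x V) (join_edges E x Sk) \<alpha>)
            + (int j - int k) * int (chrom_coeff (insert x V) (join_edges E x Si) \<alpha>)
            + (int k - int i) * int (chrom_coeff (insert x V) (join_edges E x Sj) \<alpha>) = 0"
proof
  fix \<alpha>
  have K: "K \<subseteq> V" "\<And>u v. u \<in> K \<Longrightarrow> v \<in> K \<Longrightarrow> u \<noteq> v \<Longrightarrow> {u, v} \<in> E"
    using assms(2) by (auto simp: is_clique_def)
  have "{x, v} \<notin> E" if "v \<in> K" for v
    using assms(4) simple_graph_edgeD[OF assms(1)] that by blast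
  then have twins: "{w, u} \<in> E \<longleftrightarrow> {w, v} \<in> E"
    if "u \<in> K" "v \<in> K" "w \<noteq> u" "w \<noteq> v" for u v w
    using that assms(3,5) by (intro adjacent_iff_of_closed_nbhd_eq[OF assms(1)]) auto
  have loopless: "{w} \<notin> E" for w
    using simple_graph_edgeD(3)[OF assms(1), of w w] by auto
  have "finite (insert x V)"
    using assms(1) by (simp add: simple_graph_def)
  then obtain q where q: "\<And>S. S \<subseteq> K \<Longrightarrow>
      chrom_coeff (insert x V) (join_edges E x S) \<alpha> + card S * q = chrom_coeff (insert x V) E \<alpha>"
    using chrom_coeff_join_edges_twin_clique[OF _ _ assms(3) K(2) twins loopless] K(1) by blast
  have affine: "int (chrom_coeff (insert x V) (join_edges E x S) \<alpha>)
      = int (chrom_coeff (insert x V) E \<alpha>) - int (card S) * int q" if "S \<subseteq> K" for S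
    using arg_cong[OF q[OF that], of int] by simp
  show "(int i - int j) * int (chrom_coeff (insert x V) (join_edges E x Sk) \<alpha>)
      + (int j - int k) * int (chrom_coeff (insert x V) (join_edges E x Si) \<alpha>)
      + (int k - int i) * int (chrom_coeff (insert x V) (join_edges E x Sj) \<alpha>) = 0"
    unfolding affine[OF assms(6)] affine[OF assms(8)] affine[OF assms(10)] assms(7,9,11)
    by (simp add: algebra_simps)
qed

end
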